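(* Every permutation class containing only finitely many simple permutations is partially well-ordered under the pattern containment order, i.e. it contains no infinite antichain.
   Context: A permutation $\pi$ contains $\sigma$ ($\sigma\le\pi$) if some subsequence of $\pi$ has the same relative order as $\sigma$; this is a partial order on all finite permutations. A permutation class is a downset under $\le$. An antichain is a set of pairwise incomparable permutations. An interval of a permutation is a set of contiguous positions whose values form a contiguous set; a permutation of length $n$ is simple if its only intervals have sizes $0,1,n$. *)

theory Defs
  imports Main
begin

text \<open>A permutation of length n is represented as a list of the numbers 0,...,n-1
  (0-based one-line notation), each occurring exactly once.\<close>
definition is_perm :: "nat list \<Rightarrow> bool" where
  "is_perm p \<longleftrightarrow> set p = {0..<length p} \<and> distinct p"

definition contains :: "nat list \<Rightarrow> nat list \<Rightarrow> bool" where
  "contains \<sigma> \<pi> \<longleftrightarrow>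
     (\<exists>f. strict_mono_on {0..<length \<sigma>} f \<and> (\<forall>i<length \<sigma>. f i < length \<pi>) \<and>
          (\<forall>i<length \<sigma>. \<forall>j<length \<sigma>. (\<pi> ! f i < \<pi> ! f j) \<longleftrightarrow> (\<sigma> ! i < \<sigma> ! j)))"

definition perm_class :: "nat list set \<Rightarrow> bool" where
  "perm_class C \<longleftrightarrow> (\<forall>p\<in>C. is_perm p) \<and>
     (\<forall>\<pi>\<in>C. \<forall>\<sigma>. is_perm \<sigma> \<and> contains \<sigma> \<pi> \<longrightarrow> \<sigma> \<in> C)"

definition is_interval :: "nat list \<Rightarrow> nat set \<Rightarrow> bool" where
  "is_interval p I \<longleftrightarrow> (\<exists>i j. i \<le> j \<and> j \<le> length p \<and> I = {i..<j} \<and>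
      (\<exists>a. (\<lambda>k. p ! k) ` I = {a..<a + (j - i)}))"

definition simple_perm :: "nat list \<Rightarrow> bool" where
  "simple_perm p \<longleftrightarrow> is_perm p \<and>
     (\<forall>I. is_interval p I \<longrightarrow> card I \<in> {0, 1, length p})"

definition antichain :: "nat list set \<Rightarrow> bool" where
  "antichain A \<longleftrightarrow> (\<forall>p\<in>A. \<forall>q\<in>A. p \<noteq> q \<longrightarrow> \<not> contains p q)"

end

theory Submission
  imports Defs "HOL-Library.Infinite_Set"
begin

text \<open>
  Every permutation of length at least 2 is an inflation
  \<sigma>[\<alpha>_1, ..., \<alpha>_k] of a simple permutation \<sigma> of length k \<ge> 2 by strictly shorter
  blocks \<alpha>_l, and inflation is monotone: if \<alpha>_l \<le> \<beta>_l for all l then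
  \<sigma>[\<alpha>_1, ..., \<alpha>_k] \<le> \<sigma>[\<beta>_1, ..., \<beta>_k]. Suppose the class C has an infinite antichain.
  Nash-Williams' minimal bad sequence argument (with size = length) yields a bad sequence m of
  patterns of C such that the strictly shorter patterns of the m n form an almost full set.
  Decomposing each m n, the skeletons are simple permutations in C, so by finiteness one skeleton
  occurs infinitely often; along that subsequence the blocks form k-tuples from an almost full
  set, so some block tuples are coordinatewise comparable and, by monotonicity of inflation, two
  members of m are comparable -- a contradiction.
\<close>


definition embedding :: "(nat \<Rightarrow> nat) \<Rightarrow> nat list \<Rightarrow> nat list \<Rightarrow> bool" where
  "embedding f \<sigma> \<pi> \<longleftrightarrow> strict_mono_on {0..<length \<sigma>} f \<and> (\<forall>i<length \<sigma>. f i < length \<pi>) \<and>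
     (\<forall>i<length \<sigma>. \<forall>j<length \<sigma>. (\<pi> ! f i < \<pi> ! f j) \<longleftrightarrow> (\<sigma> ! i < \<sigma> ! j))"

lemma contains_iff_embedding: "contains \<sigma> \<pi> \<longleftrightarrow> (\<exists>f. embedding f \<sigma> \<pi>)"
  unfolding contains_def embedding_def ..

lemma contains_refl: "contains \<pi> \<pi>"
  unfolding contains_iff_embedding embedding_def
  by (rule exI[of _ id]) (auto intro: strict_mono_onI)

lemma contains_trans:
  assumes "contains \<rho> \<sigma>" "contains \<sigma> \<pi>" shows "contains \<rho> \<pi>"
proof -
  obtain f g where f: "embedding f \<rho> \<sigma>" and g: "embedding g \<sigma> \<pi>"
    using assms unfolding contains_iff_embedding by blast
  have "strict_mono_on {0..<length \<rho>} (g \<circ> f)"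
  proof (rule strict_mono_onI)
    fix r s assume rs: "r \<in> {0..<length \<rho>}" "s \<in> {0..<length \<rho>}" "r < s"
    then have "f r < f s" "f s < length \<sigma>"
      using f strict_mono_onD[of _ f r s] unfolding embedding_def by auto
    then show "(g \<circ> f) r < (g \<circ> f) s"
      using g strict_mono_onD[of _ g "f r" "f s"] unfolding embedding_def by auto
  qed
  with f g have "embedding (g \<circ> f) \<rho> \<pi>" unfolding embedding_def by auto
  then show ?thesis unfolding contains_iff_embedding by blast
qed

lemma transp_contains: "transp contains"
  by (rule transpI) (rule contains_trans)

lemma contains_distinct:
  assumes "contains \<sigma> \<pi>" "distinct \<pi>" shows "distinct \<sigma>"
proof -
  obtain f where f: "embedding f \<sigma> \<pi>" using assms(1) unfolding contains_iff_embedding by blast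
  have "inj_on f {0..<length \<sigma>}"
    using f strict_mono_on_imp_inj_on unfolding embedding_def by blast
  show ?thesis unfolding distinct_conv_nth
  proof (intro allI impI)
    fix i j assume ij: "i < length \<sigma>" "j < length \<sigma>" "i \<noteq> j"
    then have "f i \<noteq> f j" using \<open>inj_on f _\<close> by (auto dest: inj_onD)
    then have "\<pi> ! f i \<noteq> \<pi> ! f j" using assms(2) f ij by (simp add: embedding_def nth_eq_iff_index_eq)
    then show "\<sigma> ! i \<noteq> \<sigma> ! j" using f ij unfolding embedding_def by (metis linorder_neq_iff)
  qed
qed

lemma contains_short:
  assumes "length \<sigma> \<le> 1" "length \<sigma> \<le> length \<pi>" shows "contains \<sigma> \<pi>"
proof -
  have only_zero: "i = 0" if "i < length \<sigma>" for i using that assms(1) by linarith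
  show ?thesis using assms unfolding contains_iff_embedding embedding_def
    by (intro exI[of _ "\<lambda>_. 0"]) (auto simp: strict_mono_on_def dest: only_zero)
qed

section \<open>Almost full relations and chain subsequences\<close>

text \<open>A sequence in X without a pair i < j with R (g i) (g j) is called bad; R is almost full
  on X if there is no bad sequence in X (for a preorder: X is well-quasi-ordered).\<close>
definition bad :: "('a \<Rightarrow> 'a \<Rightarrow> bool) \<Rightarrow> 'a set \<Rightarrow> (nat \<Rightarrow> 'a) \<Rightarrow> bool" where
  "bad R X g \<longleftrightarrow> (\<forall>n. g n \<in> X) \<and> (\<forall>i j. i < j \<longrightarrow> \<not> R (g i) (g j))"

definition almost_full_on :: "('a \<Rightarrow> 'a \<Rightarrow> bool) \<Rightarrow> 'a set \<Rightarrow> bool" where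
  "almost_full_on R X \<longleftrightarrow> (\<forall>g :: nat \<Rightarrow> 'a. (\<forall>n. g n \<in> X) \<longrightarrow> (\<exists>i j. i < j \<and> R (g i) (g j)))"

lemma almost_full_on_iff_no_bad: "almost_full_on R X \<longleftrightarrow> \<not> (\<exists>g. bad R X g)"
  unfolding almost_full_on_def bad_def by blast

lemma almost_full_finite_terminal:
  fixes y :: "nat \<Rightarrow> 'a"
  assumes af: "almost_full_on R X" and y: "\<And>j. y j \<in> X"
  shows "finite {i. \<forall>j>i. \<not> R (y i) (y j)}" (is "finite ?T")
proof (rule ccontr)
  assume "infinite ?T"
  then obtain r :: "nat \<Rightarrow> nat" where r: "strict_mono r" "\<And>n. r n \<in> ?T"
    using infinite_enumerate by blast
  have "\<forall>n. (y \<circ> r) n \<in> X" using y by simp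
  then obtain i j where "i < j" "R ((y \<circ> r) i) ((y \<circ> r) j)"
    using af unfolding almost_full_on_def by blast
  moreover have "r i < r j" using r(1) \<open>i < j\<close> by (simp add: strict_mono_less)
  moreover have "\<forall>j>r i. \<not> R (y (r i)) (y j)" using r(2)[of i] by simp
  ultimately show False by simp
qed

text \<open>If from some index on every element has a later R-successor, iterating the successor
  choice gives an R-chain along a subsequence (R transitive).\<close>
lemma chain_subsequence:
  fixes y :: "nat \<Rightarrow> 'a"
  assumes tr: "transp R" and succ: "\<And>i. N \<le> i \<Longrightarrow> \<exists>j>i. R (y i) (y j)"
  shows "\<exists>h :: nat \<Rightarrow> nat. strict_mono h \<and> (\<forall>i j. i < j \<longrightarrow> R (y (h i)) (y (h j)))"
proof -
  obtain nx where nx: "\<And>i. N \<le> i \<Longrightarrow> i < nx i \<and> R (y i) (y (nx i))"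
    using succ by metis
  define h where "h n = (nx ^^ n) N" for n
  have hN: "N \<le> h n" for n
    by (induction n) (auto simp: h_def dest: nx[THEN conjunct1] intro: le_less_trans[THEN less_imp_le])
  have step: "h n < h (Suc n) \<and> R (y (h n)) (y (h (Suc n)))" for n
    using nx[OF hN[of n]] by (simp add: h_def)
  have "R (y (h i)) (y (h j))" if "i < j" for i j
    using that
  proof (induction j)
    case (Suc j)
    then consider "i < j" | "i = j" by linarith
    then show ?case
      using Suc.IH step[of j] tr by cases (auto dest: transpD)
  qed simp
  moreover have "strict_mono h" unfolding strict_mono_Suc_iff using step by blast
  ultimately show ?thesis by blast
qed

lemma almost_full_chain_subsequence:
  fixes y :: "nat \<Rightarrow> 'a"
  assumes "transp R" "almost_full_on R X" "\<And>j. y j \<in> X"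
  shows "\<exists>h :: nat \<Rightarrow> nat. strict_mono h \<and> (\<forall>i j. i < j \<longrightarrow> R (y (h i)) (y (h j)))"
proof -
  obtain N where N: "\<forall>n\<in>{i. \<forall>j>i. \<not> R (y i) (y j)}. n < N"
    using almost_full_finite_terminal[OF assms(2,3)] unfolding finite_nat_set_iff_bounded ..
  have "\<exists>j>i. R (y i) (y j)" if "N \<le> i" for i
    using N that by (auto simp: not_less[symmetric])
  then show ?thesis by (rule chain_subsequence[OF assms(1)])
qed

lemma almost_full_chain_subsequence_tuple:
  fixes y :: "nat \<Rightarrow> nat \<Rightarrow> 'a"
  assumes tr: "transp R" and af: "almost_full_on R X" and in_X: "\<And>i l. l < k \<Longrightarrow> y i l \<in> X"
  shows "\<exists>h :: nat \<Rightarrow> nat. strict_mono h \<and> (\<forall>i j l. i < j \<longrightarrow> l < k \<longrightarrow> R (y (h i) l) (y (h j) l))"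
  using in_X
proof (induction k)
  case 0
  show ?case by (rule exI[of _ id]) (simp add: strict_mono_def)
next
  case (Suc k)
  have "\<exists>h :: nat \<Rightarrow> nat. strict_mono h \<and> (\<forall>i j l. i < j \<longrightarrow> l < k \<longrightarrow> R (y (h i) l) (y (h j) l))"
    by (rule Suc.IH) (simp add: Suc.prems)
  then obtain h1 :: "nat \<Rightarrow> nat"
    where h1: "strict_mono h1" "\<forall>i j l. i < j \<longrightarrow> l < k \<longrightarrow> R (y (h1 i) l) (y (h1 j) l)"
    by blast
  have "\<exists>h :: nat \<Rightarrow> nat. strict_mono h \<and> (\<forall>i j. i < j \<longrightarrow> R (y (h1 (h i)) k) (y (h1 (h j)) k))"
    by (rule almost_full_chain_subsequence[OF tr af]) (simp add: Suc.prems)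
  then obtain h2 :: "nat \<Rightarrow> nat"
    where h2: "strict_mono h2" "\<forall>i j. i < j \<longrightarrow> R (y (h1 (h2 i)) k) (y (h1 (h2 j)) k)"
    by blast
  have "strict_mono (h1 \<circ> h2)" using h1(1) h2(1) by (simp add: strict_mono_def)
  moreover have "R (y ((h1 \<circ> h2) i) l) (y ((h1 \<circ> h2) j) l)" if "i < j" "l < Suc k" for i j l
  proof (cases "l < k")
    case True
    have "h2 i < h2 j" using h2(1) \<open>i < j\<close> by (simp add: strict_mono_less)
    then show ?thesis using h1(2) True by simp
  next
    case False
    then have "l = k" using \<open>l < Suc k\<close> by simp
    then show ?thesis using h2(2) \<open>i < j\<close> by simp
  qed
  ultimately show ?case by (intro exI conjI allI impI)
qed

section \<open>Nash-Williams' minimal bad sequence\<close>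

text \<open>Nash-Williams' minimal bad sequence, for a size function sz: its n-th element is of
  minimal size among all bad sequences in X extending the first n elements.\<close>
definition bad_extension :: "('a \<Rightarrow> 'a \<Rightarrow> bool) \<Rightarrow> 'a set \<Rightarrow> 'a list \<Rightarrow> (nat \<Rightarrow> 'a) \<Rightarrow> bool" where
  "bad_extension R X ps g \<longleftrightarrow> bad R X g \<and> (\<forall>i<length ps. g i = ps ! i)"

definition next_minimal :: "('a \<Rightarrow> 'a \<Rightarrow> bool) \<Rightarrow> ('a \<Rightarrow> nat) \<Rightarrow> 'a set \<Rightarrow> 'a list \<Rightarrow> 'a" where
  "next_minimal R sz X ps = (SOME x. (\<exists>g. bad_extension R X ps g \<and> g (length ps) = x) \<and>
     (\<forall>h. bad_extension R X ps h \<longrightarrow> sz x \<le> sz (h (length ps))))"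

primrec minimal_prefix :: "('a \<Rightarrow> 'a \<Rightarrow> bool) \<Rightarrow> ('a \<Rightarrow> nat) \<Rightarrow> 'a set \<Rightarrow> nat \<Rightarrow> 'a list" where
  "minimal_prefix R sz X 0 = []"
| "minimal_prefix R sz X (Suc n) =
     minimal_prefix R sz X n @ [next_minimal R sz X (minimal_prefix R sz X n)]"

definition minimal_bad :: "('a \<Rightarrow> 'a \<Rightarrow> bool) \<Rightarrow> ('a \<Rightarrow> nat) \<Rightarrow> 'a set \<Rightarrow> nat \<Rightarrow> 'a" where
  "minimal_bad R sz X n = next_minimal R sz X (minimal_prefix R sz X n)"

lemma next_minimal_spec:
  assumes "bad_extension R X ps g"
  shows "\<exists>g. bad_extension R X ps g \<and> g (length ps) = next_minimal R sz X ps"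
    and "bad_extension R X ps h \<Longrightarrow> sz (next_minimal R sz X ps) \<le> sz (h (length ps))"
proof -
  obtain g0 where g0: "bad_extension R X ps g0"
    "\<forall>h. bad_extension R X ps h \<longrightarrow> sz (g0 (length ps)) \<le> sz (h (length ps))"
    using ex_has_least_nat[of "bad_extension R X ps" g "\<lambda>g. sz (g (length ps))"] assms by blast
  have "(\<exists>g. bad_extension R X ps g \<and> g (length ps) = next_minimal R sz X ps) \<and>
      (\<forall>h. bad_extension R X ps h \<longrightarrow> sz (next_minimal R sz X ps) \<le> sz (h (length ps)))"
    unfolding next_minimal_def by (rule someI[where x="g0 (length ps)"]) (use g0 in blast)
  then show "\<exists>g. bad_extension R X ps g \<and> g (length ps) = next_minimal R sz X ps"
    and "bad_extension R X ps h \<Longrightarrow> sz (next_minimal R sz X ps) \<le> sz (h (length ps))"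
    by blast+
qed

lemma length_minimal_prefix [simp]: "length (minimal_prefix R sz X n) = n"
  by (induction n) auto

lemma minimal_prefix_nth: "i < n \<Longrightarrow> minimal_prefix R sz X n ! i = minimal_bad R sz X i"
  by (induction n) (auto simp: nth_append minimal_bad_def less_Suc_eq)

lemma minimal_prefix_extends:
  assumes "bad R X g" shows "\<exists>g. bad_extension R X (minimal_prefix R sz X n) g"
proof (induction n)
  case 0
  show ?case using assms unfolding bad_extension_def by auto
next
  case (Suc n)
  then obtain g where "bad_extension R X (minimal_prefix R sz X n) g" by blast
  from next_minimal_spec(1)[OF this] obtain g' where
    g': "bad_extension R X (minimal_prefix R sz X n) g'"
        "g' n = next_minimal R sz X (minimal_prefix R sz X n)"
    by auto
  have "bad_extension R X (minimal_prefix R sz X (Suc n)) g'"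
    using g' unfolding bad_extension_def by (auto simp: nth_append less_Suc_eq)
  then show ?case by blast
qed

lemma minimal_bad_prefix_bad:
  assumes "bad R X g"
  obtains g' where "bad R X g'" "\<And>i. i \<le> n \<Longrightarrow> g' i = minimal_bad R sz X i"
proof -
  obtain g where "bad_extension R X (minimal_prefix R sz X n) g"
    using minimal_prefix_extends[OF assms] by blast
  from next_minimal_spec(1)[OF this] obtain g' where
    g': "bad_extension R X (minimal_prefix R sz X n) g'" "g' n = minimal_bad R sz X n"
    by (auto simp: minimal_bad_def)
  have "g' i = minimal_bad R sz X i" if "i \<le> n" for i
    using g' that minimal_prefix_nth[of i n] unfolding bad_extension_def
    by (cases "i = n") auto
  with g' show ?thesis using that unfolding bad_extension_def by blast
qed

lemma minimal_bad_is_bad: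
  assumes "bad R X g" shows "bad R X (minimal_bad R sz X)"
  unfolding bad_def
proof (intro conjI allI impI)
  fix n
  obtain g' where "bad R X g'" "g' n = minimal_bad R sz X n"
    using minimal_bad_prefix_bad[OF assms, where n=n and sz=sz] by auto
  then show "minimal_bad R sz X n \<in> X" unfolding bad_def by metis
next
  fix i j :: nat assume "i < j"
  obtain g' where g': "bad R X g'" "\<And>i'. i' \<le> j \<Longrightarrow> g' i' = minimal_bad R sz X i'"
    using minimal_bad_prefix_bad[OF assms, where n=j and sz=sz] by auto
  have "g' i = minimal_bad R sz X i" "g' j = minimal_bad R sz X j"
    using g'(2) \<open>i < j\<close> by simp_all
  moreover have "\<not> R (g' i) (g' j)" using g'(1) \<open>i < j\<close> unfolding bad_def by blast
  ultimately show "\<not> R (minimal_bad R sz X i) (minimal_bad R sz X j)" by simp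
qed

lemma minimal_bad_minimal:
  assumes "bad R X g" "bad R X h" "\<forall>i<n. h i = minimal_bad R sz X i"
  shows "sz (minimal_bad R sz X n) \<le> sz (h n)"
proof -
  have "bad_extension R X (minimal_prefix R sz X n) h"
    using assms(2,3) unfolding bad_extension_def by (simp add: minimal_prefix_nth)
  moreover obtain g' where "bad_extension R X (minimal_prefix R sz X n) g'"
    using minimal_prefix_extends[OF assms(1)] by blast
  ultimately show ?thesis using next_minimal_spec(2) by (fastforce simp: minimal_bad_def)
qed

lemma bad_splice:
  assumes tr: "transp R" and m: "bad R X m" and x: "bad R X x"
    and below: "\<And>j. R (x j) (m (N j))" and least: "\<And>j. N j0 \<le> N j"
  shows "bad R X (\<lambda>i. if i < N j0 then m i else x (j0 + (i - N j0)))"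
  unfolding bad_def
proof (intro conjI allI impI)
  fix i show "(if i < N j0 then m i else x (j0 + (i - N j0))) \<in> X"
    using m x unfolding bad_def by simp
next
  fix i i' :: nat assume "i < i'"
  consider "i' < N j0" | "i < N j0" "N j0 \<le> i'" | "N j0 \<le> i" by linarith
  then show "\<not> R (if i < N j0 then m i else x (j0 + (i - N j0)))
                 (if i' < N j0 then m i' else x (j0 + (i' - N j0)))"
  proof cases
    case 1
    then show ?thesis using m \<open>i < i'\<close> unfolding bad_def by simp
  next
    case 2
    let ?j = "j0 + (i' - N j0)"
    have "\<not> R (m i) (m (N ?j))" using m 2 least[of ?j] unfolding bad_def by simp
    then have "\<not> R (m i) (x ?j)" using below[of ?j] tr by (metis transpD)
    then show ?thesis using 2 by simp
  next
    case 3
    then show ?thesis using x \<open>i < i'\<close> unfolding bad_def by simp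
  qed
qed

theorem minimal_bad_sequence:
  fixes sz :: "'a \<Rightarrow> nat"
  assumes tr: "transp R" and down: "\<And>x y. y \<in> X \<Longrightarrow> R x y \<Longrightarrow> x \<in> X" and g: "bad R X g"
  defines "m \<equiv> minimal_bad R sz X"
  shows "bad R X m" and "almost_full_on R {b. \<exists>n. R b (m n) \<and> sz b < sz (m n)}"
proof -
  show m_bad: "bad R X m" unfolding m_def by (rule minimal_bad_is_bad[OF g])
  show "almost_full_on R {b. \<exists>n. R b (m n) \<and> sz b < sz (m n)}"
    unfolding almost_full_on_iff_no_bad
  proof
    assume "\<exists>x. bad R {b. \<exists>n. R b (m n) \<and> sz b < sz (m n)} x"
    then obtain x where x: "bad R {b. \<exists>n. R b (m n) \<and> sz b < sz (m n)} x" by blast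
    then have "\<forall>j. \<exists>n. R (x j) (m n) \<and> sz (x j) < sz (m n)" unfolding bad_def by blast
    then obtain N where N: "\<And>j. R (x j) (m (N j))" "\<And>j. sz (x j) < sz (m (N j))"
      by metis
    obtain j0 where j0: "\<And>j. N j0 \<le> N j"
      using ex_has_least_nat[of "\<lambda>_. True" 0 N] by blast
    have "x j \<in> X" for j using down[OF _ N(1)] m_bad unfolding bad_def by blast
    with x have "bad R X x" unfolding bad_def by blast
    define h where "h i = (if i < N j0 then m i else x (j0 + (i - N j0)))" for i
    have "bad R X h" unfolding h_def by (rule bad_splice[OF tr m_bad \<open>bad R X x\<close> N(1) j0])
    moreover have "\<forall>i<N j0. h i = minimal_bad R sz X i" unfolding h_def m_def by simp
    ultimately have "sz (m (N j0)) \<le> sz (h (N j0))"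
      unfolding m_def by (rule minimal_bad_minimal[OF g])
    then show False using N(2)[of j0] unfolding h_def by simp
  qed
qed

section \<open>Block partitions and skeletons\<close>

text \<open>Positions s..<t form a block of \<pi> if every entry outside them lies above all entries
  inside or below all of them (for a list without repetitions: an interval of \<pi>).\<close>
definition is_block :: "nat list \<Rightarrow> nat \<Rightarrow> nat \<Rightarrow> bool" where
  "is_block \<pi> s t \<longleftrightarrow> s < t \<and> t \<le> length \<pi> \<and> (\<forall>p<length \<pi>. (p < s \<or> t \<le> p) \<longrightarrow>
     ((\<forall>q. s \<le> q \<and> q < t \<longrightarrow> \<pi>!p < \<pi>!q) \<or> (\<forall>q. s \<le> q \<and> q < t \<longrightarrow> \<pi>!q < \<pi>!p)))"

definition block_partition :: "nat list \<Rightarrow> nat \<Rightarrow> (nat \<Rightarrow> nat) \<Rightarrow> bool" where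
  "block_partition \<pi> k b \<longleftrightarrow> strict_mono b \<and> b 0 = 0 \<and> b k = length \<pi> \<and>
     (\<forall>l<k. is_block \<pi> (b l) (b (Suc l)))"

text \<open>The skeleton of a block partition is the permutation of length k recording the relative
  order of the blocks (measured at their first entries); \<pi> is the inflation of the skeleton
  by the lists of its blocks.\<close>
definition block_rank :: "nat list \<Rightarrow> nat \<Rightarrow> (nat \<Rightarrow> nat) \<Rightarrow> nat \<Rightarrow> nat" where
  "block_rank \<pi> k b l = card {l'. l' < k \<and> \<pi>!(b l') < \<pi>!(b l)}"

definition skeleton :: "nat list \<Rightarrow> nat \<Rightarrow> (nat \<Rightarrow> nat) \<Rightarrow> nat list" where
  "skeleton \<pi> k b = map (block_rank \<pi> k b) [0..<k]"

definition block_list :: "nat list \<Rightarrow> (nat \<Rightarrow> nat) \<Rightarrow> nat \<Rightarrow> nat list" where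
  "block_list \<pi> b l = map (\<lambda>p. \<pi>!p) [b l..<b (Suc l)]"

definition block_of :: "(nat \<Rightarrow> nat) \<Rightarrow> nat \<Rightarrow> nat" where
  "block_of b p = (LEAST l. p < b (Suc l))"

lemma block_of_bounds:
  assumes sm: "strict_mono b" and b0: "b 0 = 0"
  shows "b (block_of b p) \<le> p" and "p < b (Suc (block_of b p))"
proof -
  have "p < b (Suc p)" using strict_mono_imp_increasing[OF sm, of "Suc p"] by simp
  then show upper: "p < b (Suc (block_of b p))"
    unfolding block_of_def by (rule LeastI[where P="\<lambda>l. p < b (Suc l)"])
  show "b (block_of b p) \<le> p"
  proof (cases "block_of b p")
    case (Suc l)
    then have "\<not> p < b (Suc l)"
      using not_less_Least[of l "\<lambda>l. p < b (Suc l)"] unfolding block_of_def by simp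
    then show ?thesis using Suc by simp
  qed (use b0 in simp)
qed

lemma block_of_between:
  assumes sm: "strict_mono b" and b0: "b 0 = 0" and q: "b i \<le> q" "q < b j"
  shows "i \<le> block_of b q" and "block_of b q < j"
proof -
  note bounds = block_of_bounds[OF sm b0, of q]
  show "i \<le> block_of b q"
  proof (rule ccontr)
    assume "\<not> i \<le> block_of b q"
    then have "b (Suc (block_of b q)) \<le> b i" using sm by (simp add: strict_mono_less_eq)
    then show False using bounds q by simp
  qed
  show "block_of b q < j"
  proof (rule ccontr)
    assume "\<not> block_of b q < j"
    then have "b j \<le> b (block_of b q)" using sm by (simp add: strict_mono_less_eq)
    then show False using bounds q by simp
  qed
qed

lemma block_of_in_partition:
  assumes P: "block_partition \<pi> k b" and p: "p < length \<pi>"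
  shows "block_of b p < k" and "b (block_of b p) \<le> p" and "p < b (Suc (block_of b p))"
  using P block_of_bounds block_of_between(2)[of b 0 p k] p
  unfolding block_partition_def by auto

lemma block_partition_le: "block_partition \<pi> k b \<Longrightarrow> l \<le> k \<Longrightarrow> b l \<le> length \<pi>"
  unfolding block_partition_def by (metis strict_mono_less_eq)

lemma partition_compare_blocks:
  assumes P: "block_partition \<pi> k b" and l: "l < k" "l' < k" "l \<noteq> l'"
    and p: "b l \<le> p" "p < b (Suc l)" and q: "b l' \<le> q" "q < b (Suc l')"
  shows "\<pi>!p < \<pi>!q \<longleftrightarrow> \<pi>!(b l) < \<pi>!(b l')"
proof -
  have sm: "strict_mono b" using P unfolding block_partition_def by simp
  have bl: "is_block \<pi> (b l) (b (Suc l))" "is_block \<pi> (b l') (b (Suc l'))"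
    using P l unfolding block_partition_def by auto
  have len: "b (Suc l) \<le> length \<pi>" "b (Suc l') \<le> length \<pi>" using block_partition_le[OF P] l by auto
  have nonempty: "b l < b (Suc l)" "b l' < b (Suc l')" using sm by (auto simp: strict_mono_less)
  have disjoint: "b (Suc l) \<le> b l' \<or> b (Suc l') \<le> b l"
    using l(3) sm by (cases "l < l'") (auto simp: strict_mono_less_eq)
  then have p_outside: "p < b l' \<or> b (Suc l') \<le> p" and l'_outside: "b l' < b l \<or> b (Suc l) \<le> b l'"
    using p nonempty by auto
  have p_vs_l': "(\<forall>r. b l' \<le> r \<and> r < b (Suc l') \<longrightarrow> \<pi>!p < \<pi>!r) \<or>
                 (\<forall>r. b l' \<le> r \<and> r < b (Suc l') \<longrightarrow> \<pi>!r < \<pi>!p)"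
    using bl(2) p_outside p len unfolding is_block_def by (meson less_le_trans)
  have l'_vs_l: "(\<forall>r. b l \<le> r \<and> r < b (Suc l) \<longrightarrow> \<pi>!(b l') < \<pi>!r) \<or>
                 (\<forall>r. b l \<le> r \<and> r < b (Suc l) \<longrightarrow> \<pi>!r < \<pi>!(b l'))"
    using bl(1) l'_outside nonempty len unfolding is_block_def by (meson less_le_trans)
  from p_vs_l' l'_vs_l show ?thesis using p q nonempty
    by (metis dual_order.refl order_less_asym)
qed

lemma block_rank_less:
  assumes "l < k" "l' < k"
  shows "block_rank \<pi> k b l < block_rank \<pi> k b l' \<longleftrightarrow> \<pi>!(b l) < \<pi>!(b l')"
proof
  assume "\<pi>!(b l) < \<pi>!(b l')"
  then have "{l''. l'' < k \<and> \<pi>!(b l'') < \<pi>!(b l)} \<subset> {l''. l'' < k \<and> \<pi>!(b l'') < \<pi>!(b l')}"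
    using assms by auto
  then show "block_rank \<pi> k b l < block_rank \<pi> k b l'"
    unfolding block_rank_def by (rule psubset_card_mono[rotated]) simp
next
  assume less: "block_rank \<pi> k b l < block_rank \<pi> k b l'"
  show "\<pi>!(b l) < \<pi>!(b l')"
  proof (rule ccontr)
    assume "\<not> \<pi>!(b l) < \<pi>!(b l')"
    then have "{l''. l'' < k \<and> \<pi>!(b l'') < \<pi>!(b l')} \<subseteq> {l''. l'' < k \<and> \<pi>!(b l'') < \<pi>!(b l)}"
      by auto
    then have "block_rank \<pi> k b l' \<le> block_rank \<pi> k b l"
      unfolding block_rank_def by (rule card_mono[rotated]) simp
    then show False using less by simp
  qed
qed

lemma length_skeleton [simp]: "length (skeleton \<pi> k b) = k"
  unfolding skeleton_def by simp

lemma skeleton_less: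
  "l < k \<Longrightarrow> l' < k \<Longrightarrow> skeleton \<pi> k b ! l < skeleton \<pi> k b ! l' \<longleftrightarrow> \<pi>!(b l) < \<pi>!(b l')"
  unfolding skeleton_def by (simp add: block_rank_less)

lemma partition_compare_skeleton:
  assumes "block_partition \<pi> k b" "l < k" "l' < k" "l \<noteq> l'"
    "b l \<le> p" "p < b (Suc l)" "b l' \<le> q" "q < b (Suc l')"
  shows "\<pi>!p < \<pi>!q \<longleftrightarrow> skeleton \<pi> k b ! l < skeleton \<pi> k b ! l'"
  using partition_compare_blocks[OF assms] skeleton_less assms(2,3) by simp

lemma skeleton_is_perm:
  assumes P: "block_partition \<pi> k b" and d: "distinct \<pi>"
  shows "is_perm (skeleton \<pi> k b)"
proof -
  have sm: "strict_mono b" using P unfolding block_partition_def by simp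
  have in_range: "l < k \<Longrightarrow> b l < length \<pi>" for l
    using P unfolding block_partition_def by (metis strict_mono_less)
  have "\<pi>!(b l) \<noteq> \<pi>!(b l')" if "l < k" "l' < k" "l \<noteq> l'" for l l'
    using that d in_range sm by (simp add: nth_eq_iff_index_eq strict_mono_eq)
  then have dist: "distinct (skeleton \<pi> k b)"
    unfolding distinct_conv_nth by (auto simp: skeleton_less linorder_neq_iff)
  have "set (skeleton \<pi> k b) \<subseteq> {0..<k}"
  proof
    fix x assume "x \<in> set (skeleton \<pi> k b)"
    then obtain l where l: "l < k" "x = block_rank \<pi> k b l" unfolding skeleton_def by auto
    have "{l''. l'' < k \<and> \<pi>!(b l'') < \<pi>!(b l)} \<subseteq> {..<k} - {l}" by auto
    then have "x \<le> card ({..<k} - {l})" unfolding l block_rank_def by (rule card_mono[rotated]) simp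
    then show "x \<in> {0..<k}" using l by auto
  qed
  moreover have "card (set (skeleton \<pi> k b)) = k" using dist distinct_card by fastforce
  ultimately have "set (skeleton \<pi> k b) = {0..<k}" by (intro card_subset_eq) auto
  then show ?thesis unfolding is_perm_def using dist by simp
qed

lemma skeleton_contained:
  assumes P: "block_partition \<pi> k b" shows "contains (skeleton \<pi> k b) \<pi>"
proof -
  have sm: "strict_mono b" using P unfolding block_partition_def by simp
  have "embedding b (skeleton \<pi> k b) \<pi>"
    unfolding embedding_def
  proof (intro conjI allI impI)
    show "strict_mono_on {0..<length (skeleton \<pi> k b)} b"
      using sm by (simp add: strict_mono_def strict_mono_on_def)
    show "b i < length \<pi>" if "i < length (skeleton \<pi> k b)" for i
      using P that unfolding block_partition_def by (metis length_skeleton strict_mono_less)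
    show "(\<pi> ! b i < \<pi> ! b j) \<longleftrightarrow> (skeleton \<pi> k b ! i < skeleton \<pi> k b ! j)"
      if "i < length (skeleton \<pi> k b)" "j < length (skeleton \<pi> k b)" for i j
      using that skeleton_less by simp
  qed
  then show ?thesis unfolding contains_iff_embedding by blast
qed

lemma length_block_list: "length (block_list \<pi> b l) = b (Suc l) - b l"
  unfolding block_list_def by simp

lemma nth_block_list: "r < b (Suc l) - b l \<Longrightarrow> block_list \<pi> b l ! r = \<pi> ! (b l + r)"
  unfolding block_list_def by simp

lemma block_contained:
  assumes P: "block_partition \<pi> k b" and l: "l < k" shows "contains (block_list \<pi> b l) \<pi>"
proof -
  have "b (Suc l) \<le> length \<pi>" using block_partition_le[OF P] l by simp
  then have "embedding (\<lambda>r. b l + r) (block_list \<pi> b l) \<pi>"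
    unfolding embedding_def by (auto simp: length_block_list nth_block_list intro: strict_mono_onI)
  then show ?thesis unfolding contains_iff_embedding by blast
qed

lemma block_shorter:
  assumes P: "block_partition \<pi> k b" and k: "2 \<le> k" and l: "l < k"
  shows "length (block_list \<pi> b l) < length \<pi>"
proof -
  have sm: "strict_mono b" and b0: "b 0 = 0" and bk: "b k = length \<pi>"
    using P unfolding block_partition_def by auto
  show ?thesis
  proof (cases "Suc l < k")
    case True
    then have "b (Suc l) < b k" using sm by (simp add: strict_mono_less)
    then show ?thesis using bk by (simp add: length_block_list)
  next
    case False
    then have "Suc l = k" "0 < l" using l k by auto
    then have "b 0 < b l" "b l < b (Suc l)" "b (Suc l) = b k" using sm by (auto simp: strict_mono_less)
    then show ?thesis using bk b0 by (simp add: length_block_list)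
  qed
qed

section \<open>Monotonicity of inflation\<close>

definition inflation_map :: "(nat \<Rightarrow> nat) \<Rightarrow> (nat \<Rightarrow> nat) \<Rightarrow> (nat \<Rightarrow> nat \<Rightarrow> nat) \<Rightarrow> nat \<Rightarrow> nat" where
  "inflation_map b b' F p = b' (block_of b p) + F (block_of b p) (p - b (block_of b p))"

lemma inflation_map_location:
  assumes P: "block_partition \<pi> k b" and P': "block_partition \<pi>' k b'"
    and F: "\<And>l. l < k \<Longrightarrow> embedding (F l) (block_list \<pi> b l) (block_list \<pi>' b' l)"
    and p: "p < length \<pi>"
  defines "l \<equiv> block_of b p" and "r \<equiv> p - b (block_of b p)"
  shows "b' l \<le> inflation_map b b' F p" and "inflation_map b b' F p < b' (Suc l)"
    and "\<pi>' ! inflation_map b b' F p = block_list \<pi>' b' l ! F l r"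
    and "\<pi> ! p = block_list \<pi> b l ! r"
proof -
  note loc = block_of_in_partition[OF P p]
  have "r < length (block_list \<pi> b l)"
    using loc unfolding l_def r_def by (simp add: length_block_list)
  then have "F l r < b' (Suc l) - b' l"
    using F[OF loc(1)[folded l_def]] unfolding embedding_def by (simp add: length_block_list)
  then show "b' l \<le> inflation_map b b' F p" "inflation_map b b' F p < b' (Suc l)"
    and "\<pi>' ! inflation_map b b' F p = block_list \<pi>' b' l ! F l r"
    unfolding inflation_map_def l_def r_def by (simp_all add: nth_block_list)
  show "\<pi> ! p = block_list \<pi> b l ! r"
    using loc unfolding l_def r_def by (simp add: nth_block_list)
qed

lemma inflation_map_mono:
  assumes P: "block_partition \<pi> k b" and P': "block_partition \<pi>' k b'"
    and F: "\<And>l. l < k \<Longrightarrow> embedding (F l) (block_list \<pi> b l) (block_list \<pi>' b' l)"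
  shows "strict_mono_on {0..<length \<pi>} (inflation_map b b' F)"
proof (rule strict_mono_onI)
  fix p q assume pq: "p \<in> {0..<length \<pi>}" "q \<in> {0..<length \<pi>}" "p < q"
  let ?lp = "block_of b p" and ?lq = "block_of b q"
  have sm: "strict_mono b" and sm': "strict_mono b'"
    using P P' unfolding block_partition_def by auto
  note Bp = block_of_in_partition[OF P, of p] and Bq = block_of_in_partition[OF P, of q]
  note Lp = inflation_map_location[OF P P' F, of p] and Lq = inflation_map_location[OF P P' F, of q]
  consider "?lp = ?lq" | "?lp < ?lq" | "?lq < ?lp" by linarith
  then show "inflation_map b b' F p < inflation_map b b' F q"
  proof cases
    case 1
    have "F ?lp (p - b ?lp) < F ?lp (q - b ?lp)"
      using F[OF Bp(1)] strict_mono_onD[of "{0..<length (block_list \<pi> b ?lp)}" "F ?lp"] pq Bp Bq 1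
      unfolding embedding_def by (simp add: length_block_list)
    then show ?thesis unfolding inflation_map_def using 1 by simp
  next
    case 2
    then have "b' (Suc ?lp) \<le> b' ?lq" using sm' by (simp add: strict_mono_less_eq)
    then show ?thesis using Lp Lq pq by fastforce
  next
    case 3
    then have "b (Suc ?lq) \<le> b ?lp" using sm by (simp add: strict_mono_less_eq)
    then show ?thesis using Bp Bq pq by fastforce
  qed
qed

lemma inflation_map_order:
  assumes P: "block_partition \<pi> k b" and P': "block_partition \<pi>' k b'"
    and same: "skeleton \<pi> k b = skeleton \<pi>' k b'"
    and F: "\<And>l. l < k \<Longrightarrow> embedding (F l) (block_list \<pi> b l) (block_list \<pi>' b' l)"
    and p: "p < length \<pi>" and q: "q < length \<pi>"
  shows "\<pi>' ! inflation_map b b' F p < \<pi>' ! inflation_map b b' F q \<longleftrightarrow> \<pi> ! p < \<pi> ! q"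
proof -
  let ?lp = "block_of b p" and ?lq = "block_of b q"
  note Bp = block_of_in_partition[OF P p] and Bq = block_of_in_partition[OF P q]
  note Lp = inflation_map_location[OF P P' F p] and Lq = inflation_map_location[OF P P' F q]
  show ?thesis
  proof (cases "?lp = ?lq")
    case True
    have "p - b ?lp < length (block_list \<pi> b ?lp)" "q - b ?lp < length (block_list \<pi> b ?lp)"
      using Bp Bq True by (simp_all add: length_block_list)
    then show ?thesis using F[OF Bp(1)] Lp(3,4) Lq(3,4) True unfolding embedding_def by simp
  next
    case False
    show ?thesis
      using partition_compare_skeleton[OF P Bp(1) Bq(1) False Bp(2,3) Bq(2,3)]
        partition_compare_skeleton[OF P' Bp(1) Bq(1) False Lp(1,2) Lq(1,2)] same
      by simp
  qed
qed

lemma inflation_contains: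
  assumes P: "block_partition \<pi> k b" and P': "block_partition \<pi>' k b'"
    and same: "skeleton \<pi> k b = skeleton \<pi>' k b'"
    and blocks: "\<And>l. l < k \<Longrightarrow> contains (block_list \<pi> b l) (block_list \<pi>' b' l)"
  shows "contains \<pi> \<pi>'"
proof -
  obtain F where F: "\<And>l. l < k \<Longrightarrow> embedding (F l) (block_list \<pi> b l) (block_list \<pi>' b' l)"
    using blocks unfolding contains_iff_embedding by metis
  have "inflation_map b b' F p < length \<pi>'" if "p < length \<pi>" for p
    using inflation_map_location(2)[OF P P' F that] block_partition_le[OF P']
      block_of_in_partition(1)[OF P that] by (meson Suc_leI less_le_trans)
  with inflation_map_mono[OF P P' F] inflation_map_order[OF P P' same F]
  have "embedding (inflation_map b b' F) \<pi> \<pi>'" unfolding embedding_def by blast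
  then show ?thesis unfolding contains_iff_embedding by blast
qed

section \<open>Decomposition into a simple skeleton\<close>

lemma skeleton_interval_block:
  assumes P: "block_partition \<pi> k b" and d: "distinct \<pi>" and ij: "i < j" "j \<le> k"
    and img: "(\<lambda>x. skeleton \<pi> k b ! x) ` {i..<j} = {a..<a + (j - i)}"
  shows "is_block \<pi> (b i) (b j)"
proof -
  let ?s = "skeleton \<pi> k b"
  have sm: "strict_mono b" and b0: "b 0 = 0" using P unfolding block_partition_def by auto
  have dist: "distinct ?s" using skeleton_is_perm[OF P d] unfolding is_perm_def by simp
  have inside: "i \<le> block_of b q" "block_of b q < j" "?s ! block_of b q \<in> {a..<a + (j - i)}"
    "b (block_of b q) \<le> q" "q < b (Suc (block_of b q))" if "b i \<le> q" "q < b j" for q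
    using block_of_between[OF sm b0 that] block_of_bounds[OF sm b0, of q] img by auto
  have "(\<forall>q. b i \<le> q \<and> q < b j \<longrightarrow> \<pi>!p < \<pi>!q) \<or> (\<forall>q. b i \<le> q \<and> q < b j \<longrightarrow> \<pi>!q < \<pi>!p)"
    if p: "p < length \<pi>" "p < b i \<or> b j \<le> p" for p
  proof -
    let ?l = "block_of b p"
    note Bp = block_of_in_partition[OF P p(1)]
    have outside: "?l \<notin> {i..<j}"
    proof
      assume "?l \<in> {i..<j}"
      then have "b i \<le> b ?l" "b (Suc ?l) \<le> b j" using sm by (auto simp: strict_mono_less_eq)
      then show False using Bp p by simp
    qed
    have "?s ! ?l \<notin> {a..<a + (j - i)}"
    proof
      assume "?s ! ?l \<in> {a..<a + (j - i)}"
      then obtain x where "x \<in> {i..<j}" "?s ! x = ?s ! ?l" using img by (metis imageE)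
      then show False using dist Bp(1) ij outside by (auto simp: nth_eq_iff_index_eq)
    qed
    moreover have "\<pi>!p < \<pi>!q \<longleftrightarrow> ?s ! ?l < ?s ! block_of b q"
      and "\<pi>!q < \<pi>!p \<longleftrightarrow> ?s ! block_of b q < ?s ! ?l" if "b i \<le> q" "q < b j" for q
      using partition_compare_skeleton[OF P, of ?l "block_of b q"]
        partition_compare_skeleton[OF P, of "block_of b q" ?l] inside[OF that] Bp outside ij
      by auto
    ultimately show ?thesis using inside by (meson atLeastLessThan_iff not_le order.strict_trans1)
  qed
  moreover have "b i < b j" using sm ij by (simp add: strict_mono_less)
  moreover have "b j \<le> length \<pi>" using block_partition_le[OF P ij(2)] .
  ultimately show ?thesis unfolding is_block_def by blast
qed

lemma block_partition_merge:
  assumes P: "block_partition \<pi> k b" and ie: "i + e < k"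
    and merged: "is_block \<pi> (b i) (b (i + e + 1))"
  shows "block_partition \<pi> (k - e) (\<lambda>l. if l \<le> i then b l else b (l + e))"
    (is "block_partition \<pi> _ ?b'")
  unfolding block_partition_def
proof (intro conjI allI impI)
  have sm: "strict_mono b" and b0: "b 0 = 0" and bk: "b k = length \<pi>"
    using P unfolding block_partition_def by auto
  show "strict_mono ?b'"
    by (rule strict_monoI) (use sm in \<open>auto simp: strict_mono_less\<close>)
  show "?b' 0 = 0" "?b' (k - e) = length \<pi>" using b0 bk ie by auto
  fix l assume l: "l < k - e"
  consider "l < i" | "l = i" | "i < l" by linarith
  then show "is_block \<pi> (?b' l) (?b' (Suc l))"
  proof cases
    case 1 then show ?thesis using P l ie unfolding block_partition_def by simp
  next
    case 2 then show ?thesis using merged by simp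
  next
    case 3 then show ?thesis using P l unfolding block_partition_def by simp
  qed
qed

text \<open>A block partition into the least possible number k \<ge> 2 of blocks has a simple skeleton:
  an interval of size between 2 and k - 1 in the skeleton would merge blocks into fewer ones.\<close>
lemma minimal_partition_simple:
  assumes P: "block_partition \<pi> k b" and d: "distinct \<pi>" and k: "2 \<le> k"
    and least: "\<And>k' b'. block_partition \<pi> k' b' \<Longrightarrow> 2 \<le> k' \<Longrightarrow> k \<le> k'"
  shows "simple_perm (skeleton \<pi> k b)"
  unfolding simple_perm_def
proof (intro conjI allI impI)
  show "is_perm (skeleton \<pi> k b)" by (rule skeleton_is_perm[OF P d])
  fix I assume "is_interval (skeleton \<pi> k b) I"
  then obtain i j a where ij: "i \<le> j" "j \<le> k" "I = {i..<j}"
    and img: "(\<lambda>x. skeleton \<pi> k b ! x) ` I = {a..<a + (j - i)}"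
    unfolding is_interval_def by auto
  show "card I \<in> {0, 1, length (skeleton \<pi> k b)}"
  proof (rule ccontr)
    assume "card I \<notin> {0, 1, length (skeleton \<pi> k b)}"
    then have size: "2 \<le> j - i" "j - i < k" using ij by auto
    define e where "e = j - i - 1"
    have e: "1 \<le> e" "i + e + 1 = j" using size ij unfolding e_def by auto
    have merged: "is_block \<pi> (b i) (b (i + e + 1))"
      unfolding e(2) by (rule skeleton_interval_block[OF P d _ ij(2)]) (use size img ij in auto)
    have "i + e < k" using e ij by simp
    then have "block_partition \<pi> (k - e) (\<lambda>l. if l \<le> i then b l else b (l + e))"
      using block_partition_merge[OF P _ merged] by blast
    moreover have "2 \<le> k - e" using size unfolding e_def by auto
    ultimately have "k \<le> k - e" by (rule least)
    then show False using e size by simp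
  qed
qed

text \<open>Every list of at least two distinct entries is an inflation of a simple permutation of
  length at least 2: take a block partition with the least number k \<ge> 2 of blocks (the
  partition into singletons shows that one exists).\<close>
lemma simple_decomposition:
  assumes d: "distinct \<pi>" and n: "2 \<le> length \<pi>"
  obtains k b where "block_partition \<pi> k b" "2 \<le> k" "simple_perm (skeleton \<pi> k b)"
proof -
  have singletons: "block_partition \<pi> (length \<pi>) (\<lambda>l. l)"
    unfolding block_partition_def is_block_def
  proof (intro conjI allI impI)
    show "strict_mono (\<lambda>l::nat. l)" by (rule strict_monoI) simp
    fix l p assume "l < length \<pi>" "p < length \<pi>" "p < l \<or> Suc l \<le> p"
    then have "\<pi>!p \<noteq> \<pi>!l" using d by (auto simp: nth_eq_iff_index_eq)
    moreover have "\<And>q. l \<le> q \<and> q < Suc l \<longleftrightarrow> q = l" by auto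
    ultimately show "(\<forall>q. l \<le> q \<and> q < Suc l \<longrightarrow> \<pi> ! p < \<pi> ! q) \<or>
                     (\<forall>q. l \<le> q \<and> q < Suc l \<longrightarrow> \<pi> ! q < \<pi> ! p)"
      by (simp only:) (meson linorder_neq_iff)
  qed auto
  define K where "K = (LEAST k. 2 \<le> k \<and> (\<exists>b. block_partition \<pi> k b))"
  have "2 \<le> K \<and> (\<exists>b. block_partition \<pi> K b)"
    unfolding K_def by (rule LeastI[where P="\<lambda>k. 2 \<le> k \<and> (\<exists>b. block_partition \<pi> k b)"])
      (use singletons n in blast)
  then obtain b where b: "block_partition \<pi> K b" and K: "2 \<le> K" by blast
  have "K \<le> k'" if "block_partition \<pi> k' b'" "2 \<le> k'" for k' b'
    unfolding K_def by (rule Least_le) (use that in blast)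
  then have "simple_perm (skeleton \<pi> K b)" by (rule minimal_partition_simple[OF b d K])
  with b K show ?thesis using that by blast
qed

lemma antichain_bad_sequence:
  assumes "infinite A" "antichain A"
  obtains g where "bad contains A g"
proof -
  obtain g :: "nat \<Rightarrow> nat list" where g: "inj g" "range g \<subseteq> A"
    using infinite_countable_subset[OF assms(1)] by blast
  have "bad contains A g"
    unfolding bad_def
  proof (intro conjI allI impI)
    show "g n \<in> A" for n using g(2) by blast
    fix i j :: nat assume "i < j"
    then have "g i \<noteq> g j" using g(1) by (auto dest: injD)
    moreover have "g i \<in> A" "g j \<in> A" using g(2) by blast+
    ultimately show "\<not> contains (g i) (g j)" using assms(2) unfolding antichain_def by blast
  qed
  then show ?thesis using that by blast
qed

text \<open>Entries of a bad sequence for containment have length at least 2, since shorter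
  patterns are contained in every list that is not shorter.\<close>
lemma bad_contains_length:
  assumes "bad contains X m" shows "2 \<le> length (m n)"
proof (rule ccontr)
  assume short: "\<not> 2 \<le> length (m n)"
  have no_pair: "\<not> contains (m i) (m j)" if "i < j" for i j
    using assms that unfolding bad_def by blast
  have "m (Suc n) \<noteq> []"
    using contains_short[of "m (Suc n)" "m (Suc (Suc n))"] no_pair[of "Suc n" "Suc (Suc n)"] by auto
  then have "length (m n) \<le> length (m (Suc n))" using short by (cases "m (Suc n)") auto
  then show False using contains_short[of "m n" "m (Suc n)"] no_pair[of n "Suc n"] short by simp
qed

lemma skeleton_in_class:
  assumes C: "perm_class C" and c: "c \<in> C" "contains \<pi> c"
    and P: "block_partition \<pi> k b" and d: "distinct \<pi>"
  shows "skeleton \<pi> k b \<in> C"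
proof -
  have "contains (skeleton \<pi> k b) c"
    using contains_trans[OF skeleton_contained[OF P] c(2)] .
  then show ?thesis
    using C c(1) skeleton_is_perm[OF P d] unfolding perm_class_def by blast
qed

lemma pattern_sequence_decomposition:
  assumes C: "perm_class C" and patterns: "\<And>n. \<exists>c\<in>C. contains (m n) c"
    and long: "\<And>n. 2 \<le> length (m n)"
  obtains K B where "\<And>n. block_partition (m n) (K n) (B n)" "\<And>n. 2 \<le> K n"
    "\<And>n. skeleton (m n) (K n) (B n) \<in> {p \<in> C. simple_perm p}"
proof -
  have distinct: "distinct (m n)" for n
    using patterns[of n] C contains_distinct unfolding perm_class_def is_perm_def by blast
  have "\<exists>k b. block_partition (m n) k b \<and> 2 \<le> k \<and> skeleton (m n) k b \<in> {p \<in> C. simple_perm p}"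
    for n
  proof -
    obtain k b where "block_partition (m n) k b" "2 \<le> k" "simple_perm (skeleton (m n) k b)"
      using simple_decomposition[OF distinct long] .
    moreover have "skeleton (m n) k b \<in> C"
      using patterns[of n] skeleton_in_class[OF C _ _ \<open>block_partition (m n) k b\<close> distinct] by blast
    ultimately show ?thesis by blast
  qed
  then obtain K B where "\<And>n. block_partition (m n) (K n) (B n) \<and> 2 \<le> K n \<and>
      skeleton (m n) (K n) (B n) \<in> {p \<in> C. simple_perm p}"
    by metis
  then show ?thesis using that by blast
qed

lemma constant_subsequence:
  fixes f :: "nat \<Rightarrow> 'a"
  assumes "finite (range f)"
  obtains e :: "nat \<Rightarrow> nat" and v where "strict_mono e" "\<And>i. f (e i) = v"
proof -
  obtain n0 where inf: "infinite {n. f n = f n0}"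
    using pigeonhole_infinite[OF infinite_UNIV_nat assms] by auto
  have "strict_mono (enumerate {n. f n = f n0})"
    using enumerate_mono[OF _ inf] by (simp add: strict_mono_def)
  moreover have "f (enumerate {n. f n = f n0} i) = f n0" for i
    using enumerate_in_set[OF inf] by simp
  ultimately show ?thesis using that by blast
qed

text \<open>Inflations of one skeleton whose blocks come from an almost full set are never bad:
  a subsequence along which all blocks form containment chains exists, and two of its
  members are comparable by monotonicity of inflation.\<close>
lemma inflations_good:
  fixes y :: "nat \<Rightarrow> nat list"
  assumes af: "almost_full_on contains B"
    and P: "\<And>i. block_partition (y i) k (b i)"
    and same: "\<And>i. skeleton (y i) k (b i) = \<sigma>"
    and blocks: "\<And>i l. l < k \<Longrightarrow> block_list (y i) (b i) l \<in> B"
  shows "\<exists>i j. i < j \<and> contains (y i) (y j)"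
proof -
  obtain h :: "nat \<Rightarrow> nat" where h: "strict_mono h"
    "\<forall>i j l. i < j \<longrightarrow> l < k \<longrightarrow> contains (block_list (y (h i)) (b (h i)) l) (block_list (y (h j)) (b (h j)) l)"
    using almost_full_chain_subsequence_tuple[OF transp_contains af, of k "\<lambda>i l. block_list (y i) (b i) l"]
      blocks by blast
  have "contains (y (h 0)) (y (h 1))"
    by (rule inflation_contains[OF P P]) (use same h(2) in auto)
  moreover have "h 0 < h 1" using h(1) by (simp add: strict_mono_less)
  ultimately show ?thesis by blast
qed

text \<open>A sequence whose strictly shorter patterns form an almost full set, and which is
  decomposed into at least two blocks over only finitely many distinct skeletons, contains a
  comparable pair: restrict to a subsequence with a common skeleton and apply the previous lemma
  (the blocks are strictly shorter patterns).\<close>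
lemma finitely_many_skeletons_good:
  fixes y :: "nat \<Rightarrow> nat list"
  assumes af: "almost_full_on contains {\<beta>. \<exists>n. contains \<beta> (y n) \<and> length \<beta> < length (y n)}"
    and P: "\<And>n. block_partition (y n) (K n) (B n)" and two: "\<And>n. 2 \<le> K n"
    and finite: "finite (range (\<lambda>n. skeleton (y n) (K n) (B n)))"
  shows "\<exists>i j. i < j \<and> contains (y i) (y j)"
proof -
  obtain e :: "nat \<Rightarrow> nat" and \<sigma> where e: "strict_mono e"
    "\<And>i. skeleton (y (e i)) (K (e i)) (B (e i)) = \<sigma>"
    by (rule constant_subsequence[OF finite]) blast
  then have K: "K (e i) = length \<sigma>" for i by (metis length_skeleton)
  have "\<exists>i j. i < j \<and> contains (y (e i)) (y (e j))"
  proof (rule inflations_good[OF af])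
    show "block_partition (y (e i)) (length \<sigma>) (B (e i))" for i using P K by metis
    show "skeleton (y (e i)) (length \<sigma>) (B (e i)) = \<sigma>" for i using e(2) K by metis
    show "block_list (y (e i)) (B (e i)) l \<in> {\<beta>. \<exists>n. contains \<beta> (y n) \<and> length \<beta> < length (y n)}"
      if "l < length \<sigma>" for i l
      using block_contained[OF P, of l "e i"] block_shorter[OF P two, of l "e i"] that K by auto
  qed
  then show ?thesis using e(1) by (meson strict_mono_less)
qed

theorem mainTheorem6:
  assumes "perm_class C"
    and "finite {p \<in> C. simple_perm p}"
  shows "\<not> (\<exists>A. A \<subseteq> C \<and> infinite A \<and> antichain A)"
proof
  assume "\<exists>A. A \<subseteq> C \<and> infinite A \<and> antichain A"
  then obtain A where A: "A \<subseteq> C" "infinite A" "antichain A" by blast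
  define X where "X = {x. \<exists>c\<in>C. contains x c}"
  have down: "x \<in> X" if "y \<in> X" "contains x y" for x y
    using that contains_trans unfolding X_def by blast
  obtain g where "bad contains A g" using antichain_bad_sequence[OF A(2,3)] .
  then have "bad contains X g" using A(1) contains_refl unfolding bad_def X_def by blast
  define m where "m = minimal_bad contains length X"
  have minimal: "bad contains X m"
    "almost_full_on contains {\<beta>. \<exists>n. contains \<beta> (m n) \<and> length \<beta> < length (m n)}"
    unfolding m_def
    using minimal_bad_sequence[where X=X and sz=length, OF transp_contains] down \<open>bad contains X g\<close>
    by blast+
  have patterns: "\<exists>c\<in>C. contains (m n) c" for n using minimal(1) unfolding bad_def X_def by blast
  obtain K B where dec: "\<And>n. block_partition (m n) (K n) (B n)" "\<And>n. 2 \<le> K n"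
    "\<And>n. skeleton (m n) (K n) (B n) \<in> {p \<in> C. simple_perm p}"
    using pattern_sequence_decomposition[where m=m, OF assms(1) patterns bad_contains_length[OF minimal(1)]]
    by blast
  have "finite (range (\<lambda>n. skeleton (m n) (K n) (B n)))"
    using dec(3) assms(2) by (blast intro: finite_subset)
  then have "\<exists>i j. i < j \<and> contains (m i) (m j)"
    by (rule finitely_many_skeletons_good[OF minimal(2) dec(1,2)])
  then show False using minimal(1) unfolding bad_def by blast
qed

end
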